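(* Let $E=(A\subset B)\in\mathcal S$ have Klein tableau $\Pi=[\gamma^0,\ldots,\gamma^e;\varphi^2,\ldots,\varphi^e]$ and let $s\le e$. Then the embedding $E\!\downarrow_s=(p^sA\subset B)$ has Klein tableau $$\Pi(E\!\downarrow_s)=[\gamma^s,\ldots,\gamma^e;\varphi^{2+s},\ldots,\varphi^e]=\Pi|_{e-s}^e.$$
   Context: Let $R$ be a commutative principal ideal domain, $p$ a generator of a maximal ideal, $k=R/(p)$. A $p$-module is a finite-length $R$-module annihilated by some power of $p$. For a $p$-module $B$, $\mathrm{type}(B)$ is the partition $\beta$ with conjugate $\beta'_i=\dim_kp^{i-1}B/p^iB$. $\mathcal S$ is the category of embeddings $(A\subset B)$ of submodules in $p$-modules. Partitions are drawn with the $i$-th column of length equal to the $i$-th part, rows numbered from the top. Klein tableau of $E=(A\subset B)$, $e$ the exponent of $A$: $\Pi(E)=[\gamma^0,\ldots,\gamma^e;\varphi^2,\ldots,\varphi^e]$ with $\gamma^i=\mathrm{type}(B/p^iA)$, and $\varphi^\ell$ the unique map from the boxes of the skew diagram $\gamma^\ell\setminus\gamma^{\ell-1}$ to positive integers, weakly increasing from left to right in each row, such that for $r\ge1$ the number of boxes in row $m$ with value $r$ equals $(\gamma^{\ell,r})'_m-(\gamma^{\ell,r-1})'_m$, where $\gamma^{\ell,r}=\mathrm{type}\big(B/(p^\ell A+p(p^{\ell-2}A\cap p^rB))\big)$. Restriction: for $u\le\ell\le e$, $\Pi|_u^\ell=[\gamma^{\ell-u},\ldots,\gamma^\ell;\varphi^{\ell-u+2},\ldots,\varphi^\ell]$,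 regarded as a Klein tableau whose stripe $\gamma^{\ell-u+j}\setminus\gamma^{\ell-u+j-1}$ is labelled $j$, subscripts retained. *)

theory Defs
  imports Complex_Main
begin

definition is_ideal :: "'r::comm_ring_1 set \<Rightarrow> bool" where
  "is_ideal I \<longleftrightarrow> 0 \<in> I \<and> (\<forall>x\<in>I. \<forall>y\<in>I. x + y \<in> I) \<and> (\<forall>x\<in>I. \<forall>r. r * x \<in> I)"

definition pideal :: "'r::comm_ring_1 \<Rightarrow> 'r set" where
  "pideal a = {r * a | r. True}"

definition is_PID :: "'r::idom itself \<Rightarrow> bool" where
  "is_PID _ \<longleftrightarrow> (\<forall>I::'r set. is_ideal I \<longrightarrow> (\<exists>a. I = pideal a))"

definition maximal_ideal :: "'r::comm_ring_1 set \<Rightarrow> bool" where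
  "maximal_ideal M \<longleftrightarrow> is_ideal M \<and> M \<noteq> UNIV \<and>
     (\<forall>I. is_ideal I \<and> M \<subseteq> I \<longrightarrow> I = M \<or> I = UNIV)"

definition pmul :: "('r::comm_ring_1 \<Rightarrow> 'm::ab_group_add \<Rightarrow> 'm) \<Rightarrow> 'r \<Rightarrow> nat \<Rightarrow> 'm set \<Rightarrow> 'm set" where
  "pmul scale p i X = {scale (p ^ i) x | x. x \<in> X}"

definition msum :: "'m::ab_group_add set \<Rightarrow> 'm set \<Rightarrow> 'm set" where
  "msum X Y = {x + y | x y. x \<in> X \<and> y \<in> Y}"

definition finite_length :: "('r::comm_ring_1 \<Rightarrow> 'm::ab_group_add \<Rightarrow> 'm) \<Rightarrow> 'm set \<Rightarrow> bool" where
  "finite_length scale B \<longleftrightarrow> (\<exists>N. \<forall>n (W::nat \<Rightarrow> 'm set).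
     (\<forall>i\<le>n. module.subspace scale (W i) \<and> W i \<subseteq> B) \<and> (\<forall>i<n. W i \<subset> W (Suc i)) \<longrightarrow> n \<le> N)"

definition p_module :: "('r::comm_ring_1 \<Rightarrow> 'm::ab_group_add \<Rightarrow> 'm) \<Rightarrow> 'r \<Rightarrow> 'm set \<Rightarrow> bool" where
  "p_module scale p B \<longleftrightarrow> module.subspace scale B \<and> finite_length scale B \<and>
     (\<exists>n. pmul scale p n B = {0})"

text \<open>Dimension over k = R/(p) of the quotient V/U (for submodules U \<subseteq> V with p V \<subseteq> U):
  the maximal number of elements of V whose classes are k-linearly independent in V/U.\<close>
definition dimk :: "('r::comm_ring_1 \<Rightarrow> 'm::ab_group_add \<Rightarrow> 'm) \<Rightarrow> 'r \<Rightarrow> 'm set \<Rightarrow> 'm set \<Rightarrow> nat" where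
  "dimk scale p U V = Sup {n. \<exists>v::nat \<Rightarrow> 'm. (\<forall>i<n. v i \<in> V) \<and>
      (\<forall>c::nat \<Rightarrow> 'r. (\<Sum>i<n. scale (c i) (v i)) \<in> U \<longrightarrow> (\<forall>i<n. p dvd c i))}"

text \<open>A partition is a function nat \<Rightarrow> nat, its parts being the values at 1, 2, 3, ...
  (value at 0 is 0 by convention). conj gives the conjugate partition.\<close>
definition conj :: "(nat \<Rightarrow> nat) \<Rightarrow> nat \<Rightarrow> nat" where
  "conj \<beta> m = (if m = 0 then 0 else card {j. 1 \<le> j \<and> m \<le> \<beta> j})"

text \<open>type(B/N) for submodules N \<subseteq> B: the partition whose conjugate has i-th part
  dim_k p^(i-1)(B/N) / p^i(B/N) = dim_k (p^(i-1)B + N)/(p^i B + N).\<close>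
definition mtype :: "('r::comm_ring_1 \<Rightarrow> 'm::ab_group_add \<Rightarrow> 'm) \<Rightarrow> 'r \<Rightarrow> 'm set \<Rightarrow> 'm set \<Rightarrow> nat \<Rightarrow> nat" where
  "mtype scale p B N = conj (\<lambda>i. if i = 0 then 0 else
      dimk scale p (msum (pmul scale p i B) N) (msum (pmul scale p (i - 1) B) N))"

definition boxes :: "(nat \<Rightarrow> nat) \<Rightarrow> (nat \<times> nat) set" where
  "boxes lam = {(m, c). 1 \<le> m \<and> 1 \<le> c \<and> m \<le> lam c}"

definition expo :: "('r::comm_ring_1 \<Rightarrow> 'm::ab_group_add \<Rightarrow> 'm) \<Rightarrow> 'r \<Rightarrow> 'm set \<Rightarrow> nat" where
  "expo scale p A = (LEAST e. pmul scale p e A = {0})"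

definition kgamma :: "('r::comm_ring_1 \<Rightarrow> 'm::ab_group_add \<Rightarrow> 'm) \<Rightarrow> 'r \<Rightarrow> 'm set \<Rightarrow> 'm set \<Rightarrow> nat \<Rightarrow> nat \<Rightarrow> nat" where
  "kgamma scale p A B i = mtype scale p B (pmul scale p i A)"

definition kgamma2 :: "('r::comm_ring_1 \<Rightarrow> 'm::ab_group_add \<Rightarrow> 'm) \<Rightarrow> 'r \<Rightarrow> 'm set \<Rightarrow> 'm set \<Rightarrow> nat \<Rightarrow> nat \<Rightarrow> nat \<Rightarrow> nat" where
  "kgamma2 scale p A B l r = mtype scale p B
      (msum (pmul scale p l A) (pmul scale p 1 (pmul scale p (l - 2) A \<inter> pmul scale p r B)))"

text \<open>Outside the skew diagram the map is set to 0 (convention making it a total function).\<close>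
definition kphi :: "('r::comm_ring_1 \<Rightarrow> 'm::ab_group_add \<Rightarrow> 'm) \<Rightarrow> 'r \<Rightarrow> 'm set \<Rightarrow> 'm set \<Rightarrow> nat \<Rightarrow> nat \<times> nat \<Rightarrow> nat" where
  "kphi scale p A B l = (let S = boxes (kgamma scale p A B l) - boxes (kgamma scale p A B (l - 1)) in
     THE f. (\<forall>x. x \<notin> S \<longrightarrow> f x = 0) \<and> (\<forall>x\<in>S. 0 < f x) \<and>
       (\<forall>m c c'. (m, c) \<in> S \<and> (m, c') \<in> S \<and> c \<le> c' \<longrightarrow> f (m, c) \<le> f (m, c')) \<and>
       (\<forall>m r. 1 \<le> m \<and> 1 \<le> r \<longrightarrow>
          int (card {c. (m, c) \<in> S \<and> f (m, c) = r}) =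
          int (conj (kgamma2 scale p A B l r) m) - int (conj (kgamma2 scale p A B l (r - 1)) m)))"

type_synonym klein_tableau = "(nat \<Rightarrow> nat) list \<times> (nat \<times> nat \<Rightarrow> nat) list"

definition klein :: "('r::comm_ring_1 \<Rightarrow> 'm::ab_group_add \<Rightarrow> 'm) \<Rightarrow> 'r \<Rightarrow> 'm set \<Rightarrow> 'm set \<Rightarrow> klein_tableau" where
  "klein scale p A B = (let e = expo scale p A in
     (map (kgamma scale p A B) [0..<Suc e], map (kphi scale p A B) [2..<Suc e]))"

text \<open>Restriction Pi|_u^l = [gamma^{l-u}, ..., gamma^l; phi^{l-u+2}, ..., phi^l]
  (gammas stored from index 0, phis from index 2).\<close>
definition restr :: "klein_tableau \<Rightarrow> nat \<Rightarrow> nat \<Rightarrow> klein_tableau" where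
  "restr T u l = (take (Suc u) (drop (l - u) (fst T)), take (u - 1) (drop (l - u) (snd T)))"

end

theory Submission
  imports Defs
begin

text \<open>Every ingredient of the Klein tableau of \<open>(A \<subseteq> B)\<close> is built from the submodules
  \<open>p\<^sup>i A\<close>, and \<open>p\<^sup>i (p\<^sup>s A) = p\<^sup>i\<^sup>+\<^sup>s A\<close>. Hence the tableau of \<open>(p\<^sup>s A \<subseteq> B)\<close> is the
  tableau of \<open>(A \<subseteq> B)\<close> with all indices shifted by \<open>s\<close>, and the exponent drops by \<open>s\<close>;
  reading off the last \<open>e - s + 1\<close> partitions and \<open>e - s - 1\<close> fillings is exactly the
  restriction \<open>\<Pi>|\<^sub>e\<^sub>-\<^sub>s\<^sup>e\<close>.\<close>

lemma pmul_pmul: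
  assumes "module scale"
  shows "pmul scale p i (pmul scale p s A) = pmul scale p (i + s) A"
  unfolding pmul_def using module.scale_scale[OF assms]
  by (auto simp: power_add) (metis mult.commute)+

lemma pmul_mono: "X \<subseteq> Y \<Longrightarrow> pmul scale p i X \<subseteq> pmul scale p i Y"
  unfolding pmul_def by blast

lemma pmul_eq_zero_subset:
  assumes "pmul scale p n B = {0}" and "A \<subseteq> B" and "A \<noteq> {}"
  shows "pmul scale p n A = {0}"
proof -
  have "pmul scale p n A \<subseteq> {0}"
    using pmul_mono[OF assms(2), of scale p n] assms(1) by simp
  moreover have "pmul scale p n A \<noteq> {}"
    using assms(3) unfolding pmul_def by blast
  ultimately show ?thesis by blast
qed

lemma expo_pmul:
  assumes "module scale" and "pmul scale p n A = {0}" and "s \<le> expo scale p A"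
  shows "expo scale p (pmul scale p s A) = expo scale p A - s"
proof -
  have killed: "pmul scale p (expo scale p A) A = {0}"
    unfolding expo_def using assms(2) by (rule LeastI)
  show ?thesis
    unfolding expo_def[of scale p "pmul scale p s A"] pmul_pmul[OF assms(1)]
  proof (rule Least_equality)
    show "pmul scale p (expo scale p A - s + s) A = {0}"
      using killed assms(3) by simp
  next
    fix y assume "pmul scale p (y + s) A = {0}"
    then have "expo scale p A \<le> y + s" unfolding expo_def by (rule Least_le)
    then show "expo scale p A - s \<le> y" by simp
  qed
qed

lemma kgamma_pmul:
  assumes "module scale"
  shows "kgamma scale p (pmul scale p s A) B i = kgamma scale p A B (i + s)"
  unfolding kgamma_def by (simp add: pmul_pmul[OF assms])

lemma kgamma2_pmul:
  assumes "module scale" and "2 \<le> l"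
  shows "kgamma2 scale p (pmul scale p s A) B l r = kgamma2 scale p A B (l + s) r"
proof -
  have "l - 2 + s = l + s - 2" using assms(2) by simp
  then show ?thesis unfolding kgamma2_def by (simp add: pmul_pmul[OF assms(1)])
qed

lemma kphi_pmul:
  assumes "module scale" and "2 \<le> l"
  shows "kphi scale p (pmul scale p s A) B l = kphi scale p A B (l + s)"
proof -
  have "kgamma scale p (pmul scale p s A) B (l - 1) = kgamma scale p A B (l + s - 1)"
    using kgamma_pmul[OF assms(1), of p s A B "l - 1"] assms(2) by simp
  moreover have "kgamma2 scale p (pmul scale p s A) B l = kgamma2 scale p A B (l + s)"
    using kgamma2_pmul[OF assms] by blast
  ultimately show ?thesis
    unfolding kphi_def kgamma_pmul[OF assms(1)] by (simp only:)
qed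

lemma map_upt_shift: "map (\<lambda>i. f (i + s)) [a..<b] = map f [a + s..<b + s]"
  by (rule map_upt_eqI) (simp_all add: add.commute add.left_commute)

lemma klein_pmul:
  assumes "module scale" and "pmul scale p n A = {0}" and "s \<le> expo scale p A"
  shows "klein scale p (pmul scale p s A) B =
           (map (kgamma scale p A B) [s..<Suc (expo scale p A)],
            map (kphi scale p A B) [s + 2..<Suc (expo scale p A)])"
proof -
  let ?e = "expo scale p A"
  have "kgamma scale p (pmul scale p s A) B = (\<lambda>i. kgamma scale p A B (i + s))"
    by (rule ext) (rule kgamma_pmul[OF assms(1)])
  then have gamma: "map (kgamma scale p (pmul scale p s A) B) [0..<Suc (?e - s)]
      = map (kgamma scale p A B) [s..<Suc ?e]"
    using map_upt_shift[of "kgamma scale p A B" s 0 "Suc (?e - s)"] assms(3)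
    by (simp del: upt_Suc)
  have "map (kphi scale p (pmul scale p s A) B) [2..<Suc (?e - s)]
      = map (\<lambda>l. kphi scale p A B (l + s)) [2..<Suc (?e - s)]"
    by (rule map_cong[OF refl], rule kphi_pmul[OF assms(1)]) auto
  also have "\<dots> = map (kphi scale p A B) [s + 2..<Suc ?e]"
    using map_upt_shift[of "kphi scale p A B" s 2 "Suc (?e - s)"] assms(3)
    by (simp del: upt_Suc add: add.commute)
  finally have phi: "map (kphi scale p (pmul scale p s A) B) [2..<Suc (?e - s)]
      = map (kphi scale p A B) [s + 2..<Suc ?e]" .
  show ?thesis
    unfolding klein_def Let_def expo_pmul[OF assms] gamma phi ..
qed

lemma restr_klein:
  assumes "s \<le> expo scale p A"
  shows "restr (klein scale p A B) (expo scale p A - s) (expo scale p A) =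
           (map (kgamma scale p A B) [s..<Suc (expo scale p A)],
            map (kphi scale p A B) [s + 2..<Suc (expo scale p A)])"
proof -
  let ?e = "expo scale p A"
  have gamma: "take (Suc (?e - s)) (drop s [0..<Suc ?e]) = [s..<Suc ?e]"
    using assms by (simp del: upt_Suc)
  have phi: "take (?e - s - 1) (drop s [2..<Suc ?e]) = [s + 2..<Suc ?e]"
    by (simp del: upt_Suc add: add.commute)
  have shift: "?e - (?e - s) = s"
    using assms by simp
  show ?thesis
    unfolding restr_def klein_def Let_def fst_conv snd_conv drop_map take_map shift gamma phi ..
qed

theorem lemma6:
  fixes scale :: "'r::idom \<Rightarrow> 'm::ab_group_add \<Rightarrow> 'm"
    and p :: 'r and A B :: "'m set" and s :: nat
  assumes PID: "is_PID TYPE('r)"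
    and pmax: "maximal_ideal (pideal p)"
    and md: "module scale"
    and Bp: "p_module scale p B"
    and As: "module.subspace scale A"
    and AB: "A \<subseteq> B"
    and se: "s \<le> expo scale p A"
  shows "klein scale p (pmul scale p s A) B =
           (map (kgamma scale p A B) [s..<Suc (expo scale p A)],
            map (kphi scale p A B) [s + 2..<Suc (expo scale p A)])
       \<and> klein scale p (pmul scale p s A) B =
           restr (klein scale p A B) (expo scale p A - s) (expo scale p A)"
proof -
  obtain n where "pmul scale p n B = {0}"
    using Bp unfolding p_module_def by blast
  moreover have "A \<noteq> {}"
    using As module.subspace_0[OF md] by blast
  ultimately have "pmul scale p n A = {0}"
    using AB pmul_eq_zero_subset by blast
  then have "klein scale p (pmul scale p s A) B =
      (map (kgamma scale p A B) [s..<Suc (expo scale p A)],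
       map (kphi scale p A B) [s + 2..<Suc (expo scale p A)])"
    by (rule klein_pmul[OF md _ se])
  then show ?thesis
    using restr_klein[OF se] by (simp only:)
qed

end
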